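(* Let $\bm\mu^N\in\mathcal P(\mathcal X^N)$, $N\in\mathbb N$, and $\mathbb M\in\mathcal P(\mathcal P(\mathcal X))$ be such that $L^N_\#\bm\mu^N\rightharpoonup\mathbb M$ weakly as $N\to\infty$. Then $$\liminf_{N\to\infty}\frac1N\mathcal H(\bm\mu^N\mid\bm\pi^N)\ge\int_{\mathcal P(\mathcal X)}(\mathcal F(\nu)-\mathcal F_0)\,\mathbb M(d\nu)=\mathbb F(\mathbb M)-\mathcal F_0,\qquad \mathcal F_0:=\inf_{\mu\in\mathcal P(\mathcal X)}\mathcal F(\mu).$$
   Context: $\mathcal X=\{1,\dots,d\}$ finite, $\mathcal P(\mathcal X)\subset\mathbb R^{\mathcal X}$. $K:\mathcal P(\mathcal X)\times\mathcal X\to\mathbb R$ with each $K_x$ twice continuously differentiable on a neighbourhood of $\mathcal P(\mathcal X)$; $U(\mu)=\sum_x\mu_xK_x(\mu)$; $\mathcal F(\mu)=\sum_x\mu_x\log\mu_x+U(\mu)$ (with $0\log0=0$); $\mathbb F(\mathbb M)=\int\mathcal F\,d\mathbb M$. For $\bm x\in\mathcal X^N$, $L^N(\bm x)=\frac1N\sum_{i=1}^N\delta_{x_i}\in\mathcal P(\mathcal X)$, and $L^N_\#\bm\mu$ is the push-forward of $\bm\mu\in\mathcal P(\mathcal X^N)$. $\bm\pi^N_{\bm x}=\exp(-NU(L^N\bm x))/\bm Z^N$ with $\bm Z^N=\sum_{\bm x}\exp(-NU(L^N\bm x))$. $\mathcal H(\bm\mu\mid\bm\pi)=\sum_{\bm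 x}\bm\mu_{\bm x}\log(\bm\mu_{\bm x}/\bm\pi_{\bm x})$. *)

theory Defs
  imports "HOL-Analysis.Analysis" "HOL-Probability.Probability"
begin

text \<open>The finite state space is a finite type 'x; probability vectors live in real^'x.\<close>

definition probvecs :: "(real^'x::finite) set" where
  "probvecs = {v. (\<forall>i. 0 \<le> v $ i) \<and> (\<Sum>i\<in>UNIV. v $ i) = 1}"

definition configs :: "nat \<Rightarrow> (nat \<Rightarrow> 'x::finite) set" where
  "configs N = PiE {..<N} (\<lambda>_. UNIV)"

definition prob_on_configs :: "nat \<Rightarrow> ((nat \<Rightarrow> 'x::finite) \<Rightarrow> real) \<Rightarrow> bool" where
  "prob_on_configs N m \<longleftrightarrow> (\<forall>x\<in>configs N. 0 \<le> m x) \<and> (\<Sum>x\<in>configs N. m x) = 1"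

definition empirical :: "nat \<Rightarrow> (nat \<Rightarrow> 'x::finite) \<Rightarrow> real^'x" where
  "empirical N x = (\<chi> y. real (card {i\<in>{..<N}. x i = y}) / real N)"

definition xlogx :: "real \<Rightarrow> real" where
  "xlogx t = (if t = 0 then 0 else t * ln t)"

definition C2_on :: "(real^'x::finite) set \<Rightarrow> (real^'x \<Rightarrow> real) \<Rightarrow> bool" where
  "C2_on A f \<longleftrightarrow> (\<exists>D1 D2. (\<forall>v\<in>A. (f has_derivative blinfun_apply (D1 v)) (at v)) \<and>
     (\<forall>v\<in>A. (D1 has_derivative blinfun_apply (D2 v)) (at v)) \<and> continuous_on A D2)"

definition Uen :: "(real^'x::finite \<Rightarrow> 'x \<Rightarrow> real) \<Rightarrow> real^'x \<Rightarrow> real" where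
  "Uen K v = (\<Sum>x\<in>UNIV. v $ x * K v x)"

definition Fen :: "(real^'x::finite \<Rightarrow> 'x \<Rightarrow> real) \<Rightarrow> real^'x \<Rightarrow> real" where
  "Fen K v = (\<Sum>x\<in>UNIV. xlogx (v $ x)) + Uen K v"

definition F0 :: "(real^'x::finite \<Rightarrow> 'x \<Rightarrow> real) \<Rightarrow> real" where
  "F0 K = (INF v\<in>probvecs. Fen K v)"

definition FFen :: "(real^'x::finite \<Rightarrow> 'x \<Rightarrow> real) \<Rightarrow> (real^'x) measure \<Rightarrow> real" where
  "FFen K M = (LINT v:probvecs|M. Fen K v)"

definition ZN :: "(real^'x::finite \<Rightarrow> 'x \<Rightarrow> real) \<Rightarrow> nat \<Rightarrow> real" where
  "ZN K N = (\<Sum>x\<in>configs N. exp (- real N * Uen K (empirical N x)))"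

definition piN :: "(real^'x::finite \<Rightarrow> 'x \<Rightarrow> real) \<Rightarrow> nat \<Rightarrow> (nat \<Rightarrow> 'x) \<Rightarrow> real" where
  "piN K N x = exp (- real N * Uen K (empirical N x)) / ZN K N"

definition relent :: "nat \<Rightarrow> ((nat \<Rightarrow> 'x::finite) \<Rightarrow> real) \<Rightarrow> ((nat \<Rightarrow> 'x) \<Rightarrow> real) \<Rightarrow> real" where
  "relent N m p = (\<Sum>x\<in>configs N. (if m x = 0 then 0 else m x * ln (m x / p x)))"

text \<open>Weak convergence of the push-forwards L^N_# mu^N to a measure M on real^'x
  (tested against bounded continuous functions).\<close>
definition pushforward_weak_conv ::
  "(nat \<Rightarrow> (nat \<Rightarrow> 'x::finite) \<Rightarrow> real) \<Rightarrow> (real^'x) measure \<Rightarrow> bool" where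
  "pushforward_weak_conv mu M \<longleftrightarrow>
     (\<forall>f :: real^'x \<Rightarrow> real. continuous_on UNIV f \<and> bounded (range f) \<longrightarrow>
        (\<lambda>N. \<Sum>x\<in>configs N. mu N x * f (empirical N x)) \<longlonglongrightarrow> integral\<^sup>L M f)"

end

theory Submission
  imports Defs "HOL-Real_Asymp.Real_Asymp"
begin

text \<open>
  Write \<open>H(\<mu>|\<pi>\<^sup>N) = \<Sum> \<mu> log \<mu> + N \<Sum> \<mu> U(L\<^sup>N) + log Z\<^sup>N\<close> and apply Gibbs' inequality twice.
  Comparing \<open>\<mu>\<close> with the type mixture \<open>q\<^sup>N\<close>, the average of the product measures \<open>\<nu>\<^sup>\<otimes>\<^sup>N\<close> over
  the at most \<open>(N+1)\<^sup>d\<close> (\<open>d = |X|\<close>) empirical measures \<open>\<nu>\<close>, which is a sub-probability satisfying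
  \<open>q\<^sup>N(x) \<ge> (N+1)\<^sup>-\<^sup>d exp (N S(L\<^sup>N x))\<close> with \<open>S(\<nu>) = \<Sum> \<nu> log \<nu>\<close>, gives
  \<open>H(\<mu>|\<pi>\<^sup>N)/N \<ge> E\<^sub>\<mu> F(L\<^sup>N) - d log(N+1)/N + (log Z\<^sup>N)/N\<close>.
  Comparing \<open>\<nu>\<^sup>\<otimes>\<^sup>N\<close> with \<open>\<pi>\<^sup>N\<close> for a minimiser \<open>\<nu>\<close> of \<open>F\<close> gives
  \<open>(log Z\<^sup>N)/N \<ge> -F\<^sub>0 - (E\<^sub>\<nu>\<^sub>\<otimes>\<^sub>N U(L\<^sup>N) - U(\<nu>))\<close>, and the bracket vanishes as \<open>N \<rightarrow> \<infinity>\<close> because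
  \<open>L\<^sup>N\<close> concentrates at \<open>\<nu>\<close> under \<open>\<nu>\<^sup>\<otimes>\<^sup>N\<close> (a variance bound) and \<open>U\<close> is continuous.
  Finally \<open>E\<^sub>\<mu> F(L\<^sup>N) \<rightarrow> \<integral> F dM\<close> by weak convergence, \<open>F\<close> being continuous on the simplex.
\<close>

section \<open>Probability vectors and configurations\<close>

lemma probvecsD:
  assumes "v \<in> probvecs"
  shows probvecs_nonneg: "0 \<le> v $ i" and probvecs_sum: "(\<Sum>i\<in>UNIV. v $ i) = 1"
  using assms unfolding probvecs_def by auto

lemma probvecs_le_1: "v \<in> probvecs \<Longrightarrow> v $ i \<le> 1"
  using member_le_sum[of i UNIV "\<lambda>i. v $ i"] by (simp add: probvecsD)

lemma closed_probvecs: "closed (probvecs :: (real^'x::finite) set)"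
  unfolding probvecs_def
  by (intro closed_Collect_conj closed_Collect_all closed_Collect_le closed_Collect_eq continuous_intros)

lemma bounded_probvecs: "bounded (probvecs :: (real^'x::finite) set)"
proof -
  have "norm v \<le> 1" if "v \<in> probvecs" for v :: "real^'x"
    using norm_le_l1_cart[of v] probvecsD[OF that] by simp
  thus ?thesis unfolding bounded_iff by blast
qed

lemma compact_probvecs: "compact (probvecs :: (real^'x::finite) set)"
  using closed_probvecs bounded_probvecs by (simp add: compact_eq_bounded_closed)

lemma convex_probvecs: "convex (probvecs :: (real^'x::finite) set)"
  unfolding convex_def probvecs_def by (auto simp: sum.distrib sum_distrib_left[symmetric])

lemma probvecs_nonempty: "(probvecs :: (real^'x::finite) set) \<noteq> {}"
proof -
  have "(\<chi> i. 1 / real CARD('x)) \<in> (probvecs :: (real^'x) set)" unfolding probvecs_def by simp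
  thus ?thesis by blast
qed

lemma finite_configs: "finite (configs N :: (nat \<Rightarrow> 'x::finite) set)"
  unfolding configs_def by (intro finite_PiE) auto

lemma configs_nonempty: "(configs N :: (nat \<Rightarrow> 'x::finite) set) \<noteq> {}"
  unfolding configs_def by (simp add: PiE_eq_empty_iff)

lemma sum_configs_prod:
  fixes w :: "nat \<Rightarrow> 'x::finite \<Rightarrow> real"
  shows "(\<Sum>x\<in>configs N. \<Prod>i<N. w i (x i)) = (\<Prod>i<N. \<Sum>s\<in>UNIV. w i s)"
  unfolding configs_def by (subst prod_sum_PiE) auto

definition occ :: "nat \<Rightarrow> (nat \<Rightarrow> 'x) \<Rightarrow> 'x \<Rightarrow> nat" where
  "occ N x y = card {i\<in>{..<N}. x i = y}"

lemma empirical_occ: "empirical N x $ y = real (occ N x y) / real N"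
  unfolding empirical_def occ_def by simp

lemma sum_lessThan_occ:
  fixes h :: "'x::finite \<Rightarrow> real"
  shows "(\<Sum>i<N. h (x i)) = (\<Sum>y\<in>UNIV. real (occ N x y) * h y)"
proof -
  have "(\<Sum>i<N. h (x i)) = (\<Sum>i<N. \<Sum>y\<in>UNIV. if x i = y then h y else 0)"
    by (simp add: sum.delta)
  also have "\<dots> = (\<Sum>y\<in>UNIV. \<Sum>i<N. if x i = y then h y else 0)" by (rule sum.swap)
  also have "\<dots> = (\<Sum>y\<in>UNIV. real (occ N x y) * h y)"
    unfolding occ_def by (simp add: sum.If_cases Int_def)
  finally show ?thesis .
qed

lemma sum_occ: "(\<Sum>y\<in>UNIV. real (occ N x y)) = real N" for x :: "nat \<Rightarrow> 'x::finite"
  using sum_lessThan_occ[where h="\<lambda>_. 1" and N=N and x=x] by simp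

lemma occ_le: "occ N x y \<le> N"
  unfolding occ_def by (rule order.trans[OF card_mono[of "{..<N}"]]) auto

lemma occ_pos: "i < N \<Longrightarrow> 0 < occ N x (x i)"
  unfolding occ_def by (subst card_gt_0_iff) auto

lemma empirical_at_sample_pos: "i < N \<Longrightarrow> 0 < empirical N x $ x i"
  using occ_pos[of i N x] by (simp add: empirical_occ)

lemma empirical_in_probvecs: "N \<ge> 1 \<Longrightarrow> empirical N x \<in> probvecs"
  unfolding probvecs_def using sum_occ[of N x]
  by (auto simp: empirical_occ sum_divide_distrib[symmetric])

lemma empirical_minus_eq_mean:
  fixes x :: "nat \<Rightarrow> 'x::finite"
  assumes "N \<ge> 1"
  shows "empirical N x $ y - c = (\<Sum>i<N. (if x i = y then 1 else 0) - c) / real N"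
proof -
  have "(\<Sum>i<N. if x i = y then 1 else 0 :: real) = real (occ N x y)"
    unfolding occ_def by (simp add: sum.If_cases Int_def)
  hence "(\<Sum>i<N. (if x i = y then 1 else 0) - c) = real (occ N x y) - real N * c"
    by (simp add: sum_subtractf)
  thus ?thesis using assms by (simp add: empirical_occ field_simps)
qed

section \<open>Product measures\<close>

definition iid :: "real^'x::finite \<Rightarrow> nat \<Rightarrow> (nat \<Rightarrow> 'x) \<Rightarrow> real" where
  "iid v N x = (\<Prod>i<N. v $ x i)"

lemma iid_nonneg: "v \<in> probvecs \<Longrightarrow> 0 \<le> iid v N x"
  unfolding iid_def by (intro prod_nonneg) (auto simp: probvecsD)

lemma sum_iid_prod:
  "(\<Sum>x\<in>configs N. iid v N x * (\<Prod>i<N. w i (x i))) = (\<Prod>i<N. \<Sum>s\<in>UNIV. v $ s * w i s)"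
  unfolding iid_def by (subst prod.distrib[symmetric]) (rule sum_configs_prod)

lemma sum_iid: "v \<in> probvecs \<Longrightarrow> (\<Sum>x\<in>configs N. iid v N x) = 1"
  using sum_iid_prod[of v N "\<lambda>_ _. 1"] by (simp add: probvecsD)

lemma sum_iid_single:
  assumes "v \<in> probvecs" and "a < N"
  shows "(\<Sum>x\<in>configs N. iid v N x * f (x a)) = (\<Sum>s\<in>UNIV. v $ s * f s)"
proof -
  have "(\<Sum>x\<in>configs N. iid v N x * (\<Prod>i<N. if i = a then f (x i) else 1))
      = (\<Prod>i<N. \<Sum>s\<in>UNIV. v $ s * (if i = a then f s else 1))"
    by (rule sum_iid_prod)
  also have "\<dots> = (\<Prod>i<N. if i = a then \<Sum>s\<in>UNIV. v $ s * f s else 1)"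
    using assms by (intro prod.cong) (auto simp: probvecsD)
  finally show ?thesis using assms by (simp add: prod.delta)
qed

lemma sum_iid_pair:
  assumes v: "v \<in> probvecs" and "a < N" "b < N" "a \<noteq> b"
  shows "(\<Sum>x\<in>configs N. iid v N x * (f (x a) * g (x b)))
       = (\<Sum>s\<in>UNIV. v $ s * f s) * (\<Sum>s\<in>UNIV. v $ s * g s)"
proof -
  define w where "w i s = (if i = a then f s else 1) * (if i = b then g s else 1)" for i s
  have "(\<Sum>x\<in>configs N. iid v N x * (f (x a) * g (x b)))
      = (\<Sum>x\<in>configs N. iid v N x * (\<Prod>i<N. w i (x i)))"
    using assms by (simp add: w_def prod.distrib prod.delta)
  also have "\<dots> = (\<Prod>i<N. \<Sum>s\<in>UNIV. v $ s * w i s)" by (rule sum_iid_prod)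
  also have "\<dots> = (\<Prod>i<N. (if i = a then \<Sum>s\<in>UNIV. v $ s * f s else 1)
                          * (if i = b then \<Sum>s\<in>UNIV. v $ s * g s else 1))"
    using assms by (intro prod.cong) (auto simp: w_def probvecsD)
  also have "\<dots> = (\<Sum>s\<in>UNIV. v $ s * f s) * (\<Sum>s\<in>UNIV. v $ s * g s)"
    using assms by (simp add: prod.distrib prod.delta)
  finally show ?thesis .
qed

lemma ln_iid:
  assumes "\<forall>i<N. 0 < v $ x i"
  shows "ln (iid v N x) = (\<Sum>i<N. ln (v $ x i))"
  using assms unfolding iid_def by (subst ln_prod) auto

definition negentropy :: "real^'x::finite \<Rightarrow> real" where
  "negentropy v = (\<Sum>y\<in>UNIV. xlogx (v $ y))"

lemma Fen_negentropy: "Fen K v = negentropy v + Uen K v"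
  unfolding Fen_def negentropy_def by simp

lemma ln_iid_empirical:
  assumes "N \<ge> 1"
  shows "ln (iid (empirical N x) N x) = real N * negentropy (empirical N x)"
proof -
  have pos: "\<forall>i<N. 0 < empirical N x $ x i" by (simp add: empirical_at_sample_pos)
  have "ln (iid (empirical N x) N x) = (\<Sum>y\<in>UNIV. real (occ N x y) * ln (empirical N x $ y))"
    unfolding ln_iid[OF pos] by (rule sum_lessThan_occ)
  also have "\<dots> = real N * negentropy (empirical N x)"
    using assms unfolding negentropy_def sum_distrib_left
    by (intro sum.cong) (auto simp: xlogx_def empirical_occ)
  finally show ?thesis .
qed

lemma sum_iid_xlogx:
  assumes v: "v \<in> probvecs"
  shows "(\<Sum>x\<in>configs N. xlogx (iid v N x)) = real N * negentropy v"
proof -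
  define h where "h s = (if v $ s = 0 then 0 else ln (v $ s))" for s
  have "xlogx (iid v N x) = (\<Sum>i<N. iid v N x * h (x i))" for x
  proof (cases "iid v N x = 0")
    case False
    hence "\<forall>i<N. 0 < v $ x i" using probvecs_nonneg[OF v] by (auto simp: iid_def less_le)
    thus ?thesis using False
      by (auto simp: xlogx_def ln_iid h_def sum_distrib_left intro!: sum.cong)
  qed (simp add: xlogx_def)
  hence "(\<Sum>x\<in>configs N. xlogx (iid v N x)) = (\<Sum>i<N. \<Sum>x\<in>configs N. iid v N x * h (x i))"
    by (simp add: sum.swap[of _ "configs N"])
  also have "\<dots> = (\<Sum>i<N. \<Sum>s\<in>UNIV. v $ s * h s)"
    using sum_iid_single[OF v] by (intro sum.cong) auto
  also have "\<dots> = real N * negentropy v"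
    by (simp add: negentropy_def h_def xlogx_def if_distrib cong: if_cong)
  finally show ?thesis .
qed

section \<open>The method of types\<close>

definition type_mixture :: "nat \<Rightarrow> (nat \<Rightarrow> 'x::finite) \<Rightarrow> real" where
  "type_mixture N x = (\<Sum>v\<in>empirical N ` configs N. iid v N x) / real (N + 1) ^ CARD('x)"

lemma card_empirical_image:
  "card (empirical N ` configs N :: (real^'x::finite) set) \<le> (N + 1) ^ CARD('x)"
proof -
  let ?types = "PiE (UNIV :: 'x set) (\<lambda>_. {..N})"
  let ?E = "empirical N ` configs N :: (real^'x) set"
  have "?E \<subseteq> (\<lambda>k. \<chi> y. real (k y) / real N) ` ?types"
  proof
    fix v assume "v \<in> ?E"
    then obtain x :: "nat \<Rightarrow> 'x" where "v = empirical N x" by blast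
    moreover have "occ N x \<in> ?types" by (auto simp: occ_le)
    ultimately show "v \<in> (\<lambda>k. \<chi> y. real (k y) / real N) ` ?types"
      unfolding empirical_def occ_def by (auto intro: rev_image_eqI)
  qed
  hence "card ?E \<le> card ((\<lambda>k. \<chi> y. real (k y) / real N) ` ?types)"
    by (rule card_mono[rotated]) (intro finite_imageI finite_PiE; simp)
  also have "\<dots> \<le> card ?types" by (intro card_image_le finite_PiE) auto
  finally show ?thesis by (simp add: card_PiE)
qed

lemma type_mixture_nonneg: "N \<ge> 1 \<Longrightarrow> 0 \<le> type_mixture N x"
  unfolding type_mixture_def
  by (intro divide_nonneg_nonneg sum_nonneg) (auto intro!: iid_nonneg empirical_in_probvecs)

lemma sum_type_mixture_le_1:
  assumes N: "N \<ge> 1"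
  shows "(\<Sum>x\<in>(configs N :: (nat \<Rightarrow> 'x::finite) set). type_mixture N x) \<le> 1"
proof -
  let ?E = "empirical N ` configs N :: (real^'x) set"
  have "(\<Sum>x\<in>configs N. type_mixture N (x :: nat \<Rightarrow> 'x))
      = (\<Sum>v\<in>?E. \<Sum>x\<in>configs N. iid v N x) / real (N + 1) ^ CARD('x)"
    unfolding type_mixture_def
    by (simp add: sum_divide_distrib[symmetric] sum.swap[of _ "configs N"])
  also have "\<dots> = (\<Sum>v\<in>?E. 1) / real (N + 1) ^ CARD('x)"
    using N by (intro arg_cong2[where f="(/)"] sum.cong) (auto simp: sum_iid empirical_in_probvecs)
  also have "\<dots> \<le> 1"
    using card_empirical_image[of N, where 'x='x] by (simp flip: of_nat_power of_nat_Suc)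
  finally show ?thesis .
qed

lemma ln_type_mixture_ge:
  fixes x :: "nat \<Rightarrow> 'x::finite"
  assumes N: "N \<ge> 1" and x: "x \<in> configs N"
  shows "0 < type_mixture N x"
    and "real N * negentropy (empirical N x) - real CARD('x) * ln (real N + 1)
           \<le> ln (type_mixture N x)"
proof -
  have iid_pos: "0 < iid (empirical N x) N x"
    unfolding iid_def by (intro prod_pos) (auto intro: empirical_at_sample_pos)
  have "iid (empirical N x) N x \<le> (\<Sum>v\<in>empirical N ` configs N. iid v N x)"
    using x N by (intro member_le_sum finite_imageI finite_configs)
      (auto intro!: iid_nonneg empirical_in_probvecs)
  hence le: "iid (empirical N x) N x / real (N + 1) ^ CARD('x) \<le> type_mixture N x"
    unfolding type_mixture_def by (intro divide_right_mono) auto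
  moreover have "0 < iid (empirical N x) N x / real (N + 1) ^ CARD('x)"
    using iid_pos by simp
  ultimately show "0 < type_mixture N x" by linarith
  have "real N * negentropy (empirical N x) - real CARD('x) * ln (real N + 1)
      = ln (iid (empirical N x) N x / real (N + 1) ^ CARD('x))"
    using iid_pos N by (simp add: ln_div ln_realpow ln_iid_empirical add.commute)
  also have "\<dots> \<le> ln (type_mixture N x)"
    using le iid_pos by (intro ln_mono) auto
  finally show "real N * negentropy (empirical N x) - real CARD('x) * ln (real N + 1)
           \<le> ln (type_mixture N x)" .
qed

section \<open>Law of large numbers for the empirical measure\<close>

lemma sum_iid_mean_sq_le:
  fixes b :: "'x::finite \<Rightarrow> real"
  assumes v: "v \<in> probvecs" and N: "N \<ge> 1"
    and centered: "(\<Sum>s\<in>UNIV. v $ s * b s) = 0" and bounded: "\<forall>s. \<bar>b s\<bar> \<le> 1"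
  shows "(\<Sum>x\<in>configs N. iid v N x * ((\<Sum>i<N. b (x i)) / real N)\<^sup>2) \<le> 1 / real N"
proof -
  have cov: "(\<Sum>x\<in>configs N. iid v N x * (b (x i) * b (x j))) \<le> (if i = j then 1 else 0)"
    if "i < N" "j < N" for i j
  proof (cases "i = j")
    case True
    have "(\<Sum>x\<in>configs N. iid v N x * (b (x i) * b (x j))) = (\<Sum>s\<in>UNIV. v $ s * (b s * b s))"
      using sum_iid_single[OF v, of i N "\<lambda>s. b s * b s"] that True by simp
    also have "\<dots> \<le> (\<Sum>s\<in>UNIV. v $ s)"
    proof (intro sum_mono mult_left_le)
      fix s
      show "b s * b s \<le> 1"
        using mult_le_one[of "\<bar>b s\<bar>" "\<bar>b s\<bar>"] bounded by (simp add: abs_mult_self_eq)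
    qed (simp add: probvecs_nonneg[OF v])
    finally show ?thesis using True probvecs_sum[OF v] by simp
  qed (use sum_iid_pair[OF v] that centered in simp)
  have sq: "((\<Sum>i<N. b (x i)) / real N)\<^sup>2 = (\<Sum>i<N. \<Sum>j<N. b (x i) * b (x j)) / (real N)\<^sup>2" for x
    by (simp add: power_divide power2_eq_square sum_product)
  have "(\<Sum>x\<in>configs N. iid v N x * ((\<Sum>i<N. b (x i)) / real N)\<^sup>2)
      = (\<Sum>i<N. \<Sum>j<N. \<Sum>x\<in>configs N. iid v N x * (b (x i) * b (x j))) / (real N)\<^sup>2"
    unfolding sq
    by (simp add: sum_divide_distrib[symmetric] sum_distrib_left sum.swap[of _ "configs N"])
  also have "\<dots> \<le> (\<Sum>i<N. \<Sum>j<N. if i = j then 1 else 0) / (real N)\<^sup>2"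
    using cov by (intro divide_right_mono sum_mono) auto
  also have "\<dots> = 1 / real N" using N by (simp add: power2_eq_square)
  finally show ?thesis .
qed

lemma sum_iid_empirical_sq_le:
  fixes v :: "real^'x::finite"
  assumes v: "v \<in> probvecs" and N: "N \<ge> 1"
  shows "(\<Sum>x\<in>configs N. iid v N x * (empirical N x $ y - v $ y)\<^sup>2) \<le> 1 / real N"
proof -
  define b where "b s = (if s = y then 1 else 0) - v $ y" for s
  have "v $ s * b s = (if s = y then v $ s else 0) - v $ s * v $ y" for s
    by (simp add: b_def algebra_simps)
  hence "(\<Sum>s\<in>UNIV. v $ s * b s) = v $ y - (\<Sum>s\<in>UNIV. v $ s) * v $ y"
    by (simp add: sum_subtractf sum_distrib_right)
  hence centered: "(\<Sum>s\<in>UNIV. v $ s * b s) = 0" using probvecs_sum[OF v] by simp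
  have "\<forall>s. \<bar>b s\<bar> \<le> 1" using probvecs_nonneg[OF v] probvecs_le_1[OF v] by (auto simp: b_def)
  with sum_iid_mean_sq_le[OF v N centered] show ?thesis
    using N by (simp add: empirical_minus_eq_mean b_def)
qed

lemma continuous_on_compact_le_quadratic:
  fixes f :: "'a::metric_space \<Rightarrow> real"
  assumes "compact S" and f: "continuous_on S f" and v: "v \<in> S" and e: "e > 0"
  shows "\<exists>C\<ge>0. \<forall>w\<in>S. f w - f v \<le> e + C * (dist w v)\<^sup>2"
proof -
  obtain d where d: "d > 0" "\<forall>w\<in>S. dist w v < d \<longrightarrow> dist (f w) (f v) < e"
    using f v e unfolding continuous_on_iff by blast
  obtain B where B: "\<forall>w\<in>S. \<bar>f w\<bar> \<le> B"
    using compact_imp_bounded[OF compact_continuous_image[OF f \<open>compact S\<close>]]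
    unfolding bounded_real by blast
  have B_nonneg: "B \<ge> 0" using B v by force
  have "f w - f v \<le> e + 2 * B / d\<^sup>2 * (dist w v)\<^sup>2" if w: "w \<in> S" for w
  proof (cases "dist w v < d")
    case True
    hence "f w - f v < e" using d(2) w by (auto simp: dist_real_def)
    moreover have "0 \<le> 2 * B / d\<^sup>2 * (dist w v)\<^sup>2" using B_nonneg by simp
    ultimately show ?thesis by linarith
  next
    case False
    hence "1 \<le> (dist w v)\<^sup>2 / d\<^sup>2" using d by (simp add: power_mono)
    hence "2 * B \<le> 2 * B * ((dist w v)\<^sup>2 / d\<^sup>2)"
      using B_nonneg by (metis mult_left_mono mult_1_right mult_nonneg_nonneg zero_le_numeral)
    moreover have "\<bar>f w\<bar> \<le> B" "\<bar>f v\<bar> \<le> B" using B w v by auto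
    ultimately show ?thesis using e by (simp add: field_simps abs_le_iff)
  qed
  thus ?thesis using B_nonneg by (intro exI[of _ "2 * B / d\<^sup>2"]) auto
qed

lemma dist_vec_sq: "(dist a b)\<^sup>2 = (\<Sum>y\<in>UNIV. (a $ y - b $ y)\<^sup>2)" for a b :: "real^'x::finite"
  unfolding dist_norm norm_vec_def L2_set_def by (simp add: sum_nonneg)

lemma eventually_sum_iid_empirical_le:
  fixes U :: "real^'x::finite \<Rightarrow> real"
  assumes U: "continuous_on probvecs U" and v: "v \<in> probvecs" and e: "e > 0"
  shows "eventually (\<lambda>N. (\<Sum>x\<in>configs N. iid v N x * U (empirical N x)) \<le> U v + e) sequentially"
proof -
  obtain C where C: "C \<ge> 0" "\<forall>w\<in>probvecs. U w - U v \<le> e/2 + C * (dist w v)\<^sup>2"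
    using continuous_on_compact_le_quadratic[OF compact_probvecs U v, of "e/2"] e by auto
  have "(\<lambda>N. C * real CARD('x) / real N) \<longlonglongrightarrow> 0" by (rule lim_const_over_n)
  hence "eventually (\<lambda>N. C * real CARD('x) / real N < e/2) sequentially"
    using e by (intro order_tendstoD(2)) auto
  thus ?thesis using eventually_ge_at_top[of 1]
  proof eventually_elim
    case (elim N)
    have "(\<Sum>x\<in>configs N. iid v N x * U (empirical N x)) - U v
        = (\<Sum>x\<in>configs N. iid v N x * (U (empirical N x) - U v))"
      using sum_iid[OF v, of N] by (simp add: right_diff_distrib sum_subtractf flip: sum_distrib_right)
    also have "\<dots> \<le> (\<Sum>x\<in>configs N. iid v N x * (e/2 + C * (dist (empirical N x) v)\<^sup>2))"
      using C(2) empirical_in_probvecs[OF elim(2)] iid_nonneg[OF v]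
      by (intro sum_mono mult_left_mono) auto
    also have "\<dots> = e/2 * (\<Sum>x\<in>configs N. iid v N x)
                       + C * (\<Sum>x\<in>configs N. iid v N x * (dist (empirical N x) v)\<^sup>2)"
      by (simp add: algebra_simps sum.distrib sum_distrib_left)
    also have "\<dots> = e/2 + C * (\<Sum>y\<in>UNIV. \<Sum>x\<in>configs N.
                                    iid v N x * (empirical N x $ y - v $ y)\<^sup>2)"
      using sum_iid[OF v, of N] unfolding dist_vec_sq
      by (simp add: sum_distrib_left sum.swap[of _ UNIV])
    also have "\<dots> \<le> e/2 + C * (\<Sum>y\<in>(UNIV::'x set). 1 / real N)"
      using sum_iid_empirical_sq_le[OF v] elim C by (intro add_left_mono mult_left_mono sum_mono) auto
    also have "\<dots> = e/2 + C * real CARD('x) / real N" by simp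
    also have "\<dots> \<le> e" using elim(1) by linarith
    finally show ?case by simp
  qed
qed

section \<open>Continuity of the free energy\<close>

lemma C2_on_imp_continuous_on: "open A \<Longrightarrow> C2_on A f \<Longrightarrow> continuous_on A f"
  unfolding C2_on_def
  by (metis continuous_at_imp_continuous_on has_derivative_continuous)

lemma continuous_on_xlogx: "continuous_on {0..} xlogx"
proof -
  have "continuous (at t within {0..}) (\<lambda>t::real. t * ln t)" if "t \<ge> 0" for t
  proof (cases "t = 0")
    case True
    have "((\<lambda>x::real. x * ln x) \<longlongrightarrow> 0) (at_right 0)" by real_asymp
    thus ?thesis using True by (simp add: continuous_within at_within_Ici_at_right)
  next
    case False
    hence "isCont (\<lambda>t::real. t * ln t) t" using that by (intro continuous_intros) auto
    thus ?thesis by (rule continuous_at_imp_continuous_at_within)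
  qed
  moreover have "xlogx = (\<lambda>t. t * ln t)" by (auto simp: xlogx_def)
  ultimately show ?thesis using continuous_on_eq_continuous_within by fastforce
qed

lemma continuous_on_negentropy: "continuous_on probvecs (negentropy :: real^'x::finite \<Rightarrow> real)"
  unfolding negentropy_def
  by (intro continuous_on_sum continuous_on_compose2[OF continuous_on_xlogx])
    (auto intro: continuous_intros simp: probvecs_nonneg)

lemma continuous_on_Fen:
  assumes "\<forall>x. continuous_on probvecs (\<lambda>v. K v x)"
  shows "continuous_on probvecs (Uen K)" and "continuous_on probvecs (Fen K)"
proof -
  show U: "continuous_on probvecs (Uen K)"
    unfolding Uen_def[abs_def] using assms by (intro continuous_intros) auto
  show "continuous_on probvecs (Fen K)"
    unfolding Fen_negentropy[abs_def] using U continuous_on_negentropy by (intro continuous_intros)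
qed

lemma F0_attained:
  assumes "continuous_on probvecs (Fen K)"
  obtains v where "v \<in> probvecs" "Fen K v = F0 K"
proof -
  obtain v where v: "v \<in> probvecs" "\<forall>w\<in>probvecs. Fen K v \<le> Fen K w"
    using continuous_attains_inf[OF compact_probvecs probvecs_nonempty assms] by blast
  hence "F0 K = Fen K v" unfolding F0_def by (intro cInf_eq_minimum) auto
  thus ?thesis using that v by simp
qed

section \<open>Entropy bounds\<close>

lemma gibbs_inequality:
  fixes p q :: "'a \<Rightarrow> real"
  assumes "finite I" and p_nonneg: "\<forall>x\<in>I. 0 \<le> p x" and "sum p I = 1"
    and q_nonneg: "\<forall>x\<in>I. 0 \<le> q x" and "sum q I \<le> 1"
    and support: "\<forall>x\<in>I. p x > 0 \<longrightarrow> q x > 0"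
  shows "0 \<le> (\<Sum>x\<in>I. if p x = 0 then 0 else p x * ln (p x / q x))"
proof -
  have "p x - q x \<le> (if p x = 0 then 0 else p x * ln (p x / q x))" if x: "x \<in> I" for x
  proof (cases "p x = 0")
    case True
    thus ?thesis using q_nonneg x by auto
  next
    case False
    hence p_pos: "p x > 0" and q_pos: "q x > 0" using p_nonneg support x by force+
    have "p x * ln (q x / p x) \<le> p x * (q x / p x - 1)"
      using p_pos q_pos by (intro mult_left_mono ln_le_minus_one) auto
    also have "\<dots> = q x - p x" using p_pos by (simp add: field_simps)
    finally show ?thesis using False p_pos q_pos by (simp add: ln_div algebra_simps)
  qed
  hence "(\<Sum>x\<in>I. p x - q x) \<le> (\<Sum>x\<in>I. if p x = 0 then 0 else p x * ln (p x / q x))"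
    by (rule sum_mono)
  moreover have "0 \<le> (\<Sum>x\<in>I. p x - q x)" using assms by (simp add: sum_subtractf)
  ultimately show ?thesis by linarith
qed

lemma ZN_pos: "0 < ZN K N"
  unfolding ZN_def using finite_configs configs_nonempty by (intro sum_pos) auto

lemma piN_pos: "0 < piN K N x"
  unfolding piN_def using ZN_pos[of K N] by simp

lemma ln_piN: "ln (piN K N x) = - real N * Uen K (empirical N x) - ln (ZN K N)"
  unfolding piN_def using ZN_pos[of K N] by (simp add: ln_div)

lemma sum_piN: "(\<Sum>x\<in>configs N. piN K N x) = 1"
  unfolding piN_def using ZN_pos[of K N] by (simp add: ZN_def flip: sum_divide_distrib)

lemma relent_piN_ge:
  fixes K :: "real^'x::finite \<Rightarrow> 'x \<Rightarrow> real"
  assumes N: "N \<ge> 1" and m: "prob_on_configs N m"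
  shows "real N * (\<Sum>x\<in>configs N. m x * Fen K (empirical N x))
           - real CARD('x) * ln (real N + 1) + ln (ZN K N)
         \<le> relent N m (piN K N)"
proof -
  let ?C = "configs N :: (nat \<Rightarrow> 'x) set" and ?q = "type_mixture N" and ?\<pi> = "piN K N"
  define c where "c = ln (ZN K N) - real CARD('x) * ln (real N + 1)"
  have m_nonneg: "\<forall>x\<in>?C. 0 \<le> m x" and m_sum: "sum m ?C = 1"
    using m unfolding prob_on_configs_def by auto
  have split: "(if m x = 0 then 0 else m x * ln (m x / ?\<pi> x))
      = (if m x = 0 then 0 else m x * ln (m x / ?q x)) + m x * (ln (?q x) - ln (?\<pi> x))"
    if "x \<in> ?C" for x
  proof (cases "m x = 0")
    case False
    hence "m x > 0" using m_nonneg that by force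
    thus ?thesis using ln_type_mixture_ge(1)[OF N that] piN_pos[of K N x]
      by (simp add: ln_div algebra_simps)
  qed simp
  have "0 \<le> (\<Sum>x\<in>?C. if m x = 0 then 0 else m x * ln (m x / ?q x))"
    using ln_type_mixture_ge(1)[OF N] type_mixture_nonneg[OF N] sum_type_mixture_le_1[OF N]
      m_nonneg m_sum
    by (intro gibbs_inequality finite_configs) auto
  moreover have "m x * (real N * Fen K (empirical N x) + c) \<le> m x * (ln (?q x) - ln (?\<pi> x))"
    if "x \<in> ?C" for x
    using ln_type_mixture_ge(2)[OF N that] m_nonneg that
    by (intro mult_left_mono) (auto simp: c_def ln_piN Fen_negentropy algebra_simps)
  hence "(\<Sum>x\<in>?C. m x * (real N * Fen K (empirical N x) + c))
      \<le> (\<Sum>x\<in>?C. m x * (ln (?q x) - ln (?\<pi> x)))"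
    by (rule sum_mono)
  moreover have "(\<Sum>x\<in>?C. m x * (real N * Fen K (empirical N x) + c))
      = real N * (\<Sum>x\<in>?C. m x * Fen K (empirical N x)) + c"
    using m_sum by (simp add: algebra_simps sum.distrib sum_distrib_left flip: sum_distrib_left)
  ultimately show ?thesis
    unfolding relent_def c_def by (simp add: split sum.distrib cong: sum.cong)
qed

lemma ln_ZN_ge:
  assumes v: "v \<in> probvecs"
  shows "- real N * negentropy v - real N * (\<Sum>x\<in>configs N. iid v N x * Uen K (empirical N x))
         \<le> ln (ZN K N)"
proof -
  let ?p = "iid v N" and ?U = "\<lambda>x. Uen K (empirical N x)"
  have "0 \<le> (\<Sum>x\<in>configs N. if ?p x = 0 then 0 else ?p x * ln (?p x / piN K N x))"
    using iid_nonneg[OF v] sum_iid[OF v] piN_pos[of K N] sum_piN[of K N]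
    by (intro gibbs_inequality finite_configs) (auto intro: less_imp_le)
  also have "\<dots> = (\<Sum>x\<in>configs N. xlogx (?p x) + real N * (?p x * ?U x) + ?p x * ln (ZN K N))"
  proof (intro sum.cong refl)
    fix x
    show "(if ?p x = 0 then 0 else ?p x * ln (?p x / piN K N x))
        = xlogx (?p x) + real N * (?p x * ?U x) + ?p x * ln (ZN K N)"
      using iid_nonneg[OF v, of N x] piN_pos[of K N x]
      by (cases "?p x = 0") (auto simp: xlogx_def ln_div ln_piN algebra_simps)
  qed
  also have "\<dots> = real N * negentropy v + real N * (\<Sum>x\<in>configs N. ?p x * ?U x) + ln (ZN K N)"
    using sum_iid_xlogx[OF v] sum_iid[OF v]
    by (simp add: sum.distrib sum_distrib_left flip: sum_distrib_right)
  finally show ?thesis by simp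
qed

lemma relent_piN_div_ge:
  fixes K :: "real^'x::finite \<Rightarrow> 'x \<Rightarrow> real"
  assumes N: "N \<ge> 1" and m: "prob_on_configs N m" and v: "v \<in> probvecs"
  shows "(\<Sum>x\<in>configs N. m x * Fen K (empirical N x)) - Fen K v
           - real CARD('x) * ln (real N + 1) / real N
           - ((\<Sum>x\<in>configs N. iid v N x * Uen K (empirical N x)) - Uen K v)
         \<le> relent N m (piN K N) / real N"
proof -
  have "real N * ((\<Sum>x\<in>configs N. m x * Fen K (empirical N x)) - Fen K v
           - real CARD('x) * ln (real N + 1) / real N
           - ((\<Sum>x\<in>configs N. iid v N x * Uen K (empirical N x)) - Uen K v))
        \<le> relent N m (piN K N)"
    using relent_piN_ge[OF N m, of K] ln_ZN_ge[OF v, of N K] N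
    by (simp add: Fen_negentropy algebra_simps)
  thus ?thesis using N by (simp add: field_simps)
qed

section \<open>Passing to the limit\<close>

lemma set_integrable_continuous_on_compact:
  fixes f :: "'a::metric_space \<Rightarrow> real"
  assumes "finite_measure M" "sets M = sets borel" "compact S" "continuous_on S f"
  shows "set_integrable M S f"
proof -
  obtain B where B: "\<forall>v\<in>S. \<bar>f v\<bar> \<le> B"
    using compact_imp_bounded[OF compact_continuous_image[OF assms(4,3)]]
    unfolding bounded_real by blast
  have "(\<lambda>v. indicator S v *\<^sub>R f v) \<in> borel_measurable M"
    using borel_measurable_continuous_on_indicator[OF borel_closed[OF compact_imp_closed] assms(4)]
      assms(2,3)
    by (simp add: measurable_cong_sets[OF assms(2) refl])
  moreover have "\<forall>v. norm (indicator S v *\<^sub>R f v) \<le> max B 0"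
    using B by (auto simp: indicator_def)
  ultimately show ?thesis unfolding set_integrable_def
    by (intro finite_measure.integrable_const_bound[OF assms(1)]) auto
qed

lemma set_integral_minus_const:
  fixes f :: "'a::metric_space \<Rightarrow> real"
  assumes M: "prob_space M" "sets M = sets borel" and S: "compact S" "measure M S = 1"
    and f: "continuous_on S f"
  shows "(LINT v:S|M. f v - c) = (LINT v:S|M. f v) - c"
proof -
  interpret prob_space M by (rule M(1))
  have S_sets: "S \<in> sets M" using M(2) S(1) by (simp add: borel_compact)
  have "(LINT v:S|M. f v - c) = (LINT v:S|M. f v) - (LINT v:S|M. c)"
    using M(2) S(1) f
    by (intro set_integral_diff(2) set_integrable_continuous_on_compact finite_measure_axioms)
      (auto intro: continuous_on_const)
  also have "(LINT v:S|M. c) = c" using S_sets S(2) by (simp add: set_integral_const)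
  finally show ?thesis .
qed

lemma tendsto_sum_empirical_set_integral:
  fixes f :: "real^'x::finite \<Rightarrow> real"
  assumes conv: "pushforward_weak_conv mu M"
    and M: "prob_space M" "sets M = sets borel" "measure M probvecs = 1"
    and f: "continuous_on probvecs f"
  shows "(\<lambda>N. \<Sum>x\<in>configs N. mu N x * f (empirical N x)) \<longlonglongrightarrow> (LINT v:probvecs|M. f v)"
proof -
  let ?P = "probvecs :: (real^'x) set"
  \<comment> \<open>Weak convergence only tests functions continuous on all of \<open>real^'x\<close>, so extend \<open>f\<close>
    by composing with the nearest-point projection onto the simplex.\<close>
  define g where "g = f \<circ> closest_point ?P"
  have proj_in: "closest_point ?P w \<in> ?P" for w
    by (rule closest_point_in_set[OF closed_probvecs probvecs_nonempty])
  have g_cont: "continuous_on UNIV g"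
    unfolding g_def using proj_in
    by (intro continuous_on_compose continuous_on_closest_point convex_probvecs closed_probvecs
        probvecs_nonempty continuous_on_subset[OF f]) auto
  have "bounded (f ` ?P)"
    by (rule compact_imp_bounded[OF compact_continuous_image[OF f compact_probvecs]])
  hence g_bounded: "bounded (range g)"
    by (rule bounded_subset) (auto simp: g_def proj_in)
  have g_f: "g v = f v" if "v \<in> ?P" for v
    using that by (simp add: g_def closest_point_self)
  have "(\<lambda>N. \<Sum>x\<in>configs N. mu N x * g (empirical N x)) \<longlonglongrightarrow> integral\<^sup>L M g"
    using conv g_cont g_bounded unfolding pushforward_weak_conv_def by blast
  moreover have "integral\<^sup>L M g = (LINT v:?P|M. f v)"
    unfolding set_lebesgue_integral_def
  proof (rule integral_cong_AE)
    show "g \<in> borel_measurable M"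
      using borel_measurable_continuous_onI[OF g_cont] by (simp add: measurable_cong_sets[OF M(2) refl])
    show "(\<lambda>v. indicator ?P v *\<^sub>R f v) \<in> borel_measurable M"
      using borel_measurable_continuous_on_indicator[OF borel_closed[OF closed_probvecs] f]
      by (simp add: measurable_cong_sets[OF M(2) refl])
    show "AE v in M. g v = indicator ?P v *\<^sub>R f v"
      using prob_space.AE_prob_1[OF M(1,3)] by eventually_elim (simp add: g_f)
  qed
  moreover have "eventually (\<lambda>N. (\<Sum>x\<in>configs N. mu N x * g (empirical N x))
                    = (\<Sum>x\<in>configs N. mu N x * f (empirical N x))) sequentially"
    using eventually_ge_at_top[of 1] by eventually_elim (simp add: g_f empirical_in_probvecs)
  ultimately show ?thesis by (simp add: tendsto_cong)
qed

lemma ereal_le_liminf_if_eventually_ge: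
  assumes "\<And>e. e > 0 \<Longrightarrow> eventually (\<lambda>N. b - e \<le> a N) sequentially"
  shows "ereal b \<le> liminf (\<lambda>N. ereal (a N))"
  unfolding le_Liminf_iff
proof (intro allI impI)
  fix y assume "y < ereal b"
  then obtain r where r: "y < ereal r" "r < b" using ereal_dense2 by force
  have "eventually (\<lambda>N. b - (b - r) \<le> a N) sequentially" using r(2) by (intro assms) simp
  thus "eventually (\<lambda>N. y < ereal (a N)) sequentially"
    by eventually_elim (use r(1) in \<open>auto intro: less_le_trans\<close>)
qed

lemma tendsto_ln_Suc_over: "(\<lambda>N. c * ln (real N + 1) / real N) \<longlonglongrightarrow> 0"
  by real_asymp

lemma liminf_relent_piN_ge:
  fixes K :: "real^'x::finite \<Rightarrow> 'x \<Rightarrow> real"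
  assumes mu_prob: "\<forall>N\<ge>1. prob_on_configs N (mu N)"
    and lim: "(\<lambda>N. \<Sum>x\<in>configs N. mu N x * Fen K (empirical N x)) \<longlonglongrightarrow> I"
    and U_cont: "continuous_on probvecs (Uen K)" and v: "v \<in> probvecs"
  shows "ereal (I - Fen K v) \<le> liminf (\<lambda>N. ereal (relent N (mu N) (piN K N) / real N))"
proof (rule ereal_le_liminf_if_eventually_ge)
  fix e :: real assume e: "e > 0"
  have "eventually (\<lambda>N. I - e/3 < (\<Sum>x\<in>configs N. mu N x * Fen K (empirical N x))) sequentially"
    using lim e by (intro order_tendstoD(1)) auto
  moreover have "eventually (\<lambda>N. real CARD('x) * ln (real N + 1) / real N < e/3) sequentially"
    using e by (intro order_tendstoD(2)[OF tendsto_ln_Suc_over]) auto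
  moreover have "eventually (\<lambda>N. (\<Sum>x\<in>configs N. iid v N x * Uen K (empirical N x))
                                  \<le> Uen K v + e/3) sequentially"
    using e by (intro eventually_sum_iid_empirical_le[OF U_cont v]) auto
  ultimately show "eventually (\<lambda>N. I - Fen K v - e \<le> relent N (mu N) (piN K N) / real N) sequentially"
    using eventually_ge_at_top[of 1]
  proof eventually_elim
    case (elim N)
    thus ?case using relent_piN_div_ge[OF elim(4) _ v, of "mu N" K] mu_prob by simp
  qed
qed

theorem proposition3p9:
  fixes K :: "real^'x::finite \<Rightarrow> 'x \<Rightarrow> real"
    and mu :: "nat \<Rightarrow> (nat \<Rightarrow> 'x) \<Rightarrow> real"
    and M :: "(real^'x) measure"
  assumes K_C2: "\<exists>A. open A \<and> probvecs \<subseteq> A \<and> (\<forall>x. C2_on A (\<lambda>v. K v x))"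
    and mu_prob: "\<forall>N\<ge>1. prob_on_configs N (mu N)"
    and M_prob: "prob_space M" and M_sets: "sets M = sets borel"
    and M_supp: "measure M probvecs = 1"
    and conv: "pushforward_weak_conv mu M"
  shows "liminf (\<lambda>N. ereal (relent N (mu N) (piN K N) / real N))
           \<ge> ereal (LINT v:probvecs|M. (Fen K v - F0 K))
       \<and> (LINT v:probvecs|M. (Fen K v - F0 K)) = FFen K M - F0 K"
proof -
  have "\<forall>x. continuous_on probvecs (\<lambda>v. K v x)"
    using K_C2 by (meson C2_on_imp_continuous_on continuous_on_subset)
  note U_cont = continuous_on_Fen(1)[OF this] and F_cont = continuous_on_Fen(2)[OF this]
  obtain v where v: "v \<in> probvecs" "Fen K v = F0 K" using F0_attained[OF F_cont] .
  have integral_eq: "(LINT w:probvecs|M. Fen K w - F0 K) = FFen K M - F0 K"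
    unfolding FFen_def
    by (rule set_integral_minus_const[OF M_prob M_sets compact_probvecs M_supp F_cont])
  have "(\<lambda>N. \<Sum>x\<in>configs N. mu N x * Fen K (empirical N x)) \<longlonglongrightarrow> FFen K M"
    unfolding FFen_def by (rule tendsto_sum_empirical_set_integral[OF conv M_prob M_sets M_supp F_cont])
  from liminf_relent_piN_ge[OF mu_prob this U_cont v(1)]
  show ?thesis using integral_eq v(2) by simp
qed

end
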